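(* Assume $\mathcal X\neq\emptyset$ and $\mathcal D\neq\emptyset$, and let $I$ be any interpretation. There is no formula $\psi$ such that, for every assignment $\sigma$, $\sigma,I\models_P\psi$ holds if and only if $\sigma$ obeys the meta-flow axiom.
   Context: Fix a set $\mathcal X$ of synchronisation variables and, for each $x\in\mathcal X$, a distinct data flow variable $\hat x$; put $\hat{\mathcal X}=\{\hat x : x\in\mathcal X\}$. Fix a set $\mathcal F$ of function symbols with arities and a set $\mathcal P$ of predicate symbols with arities, containing a binary equality symbol $=$. Let $\mathcal D$ be the set of ground terms over $\mathcal F$. Formulas and terms: $\psi ::= \top \mid x \mid \psi_1\wedge\psi_2 \mid \neg\psi \mid p(t_1,\dots,t_n)$, $t ::= \hat x \mid f(t_1,\dots,t_n)$. An assignment $\sigma$ is a partial map sending each $x\in\mathcal X$ in its domain to $\{\mathrm{true},\mathrm{false}\}$ and each $\hat x$ in its domain to $\mathcal D$. An interpretation $I$ is a partial map from pairs $(p,(d_1,\dots,d_n))$ ($p$ of arity $n$, $d_i\in\mathcal D$) to $\{\mathrm{true},\mathrm{false}\}$. $\mathrm{Val}_\sigma(\hat x)=\sigma(\hat x)$, $\mathrm{Val}_\sigma(f(t_1,\dots,t_n))=f(\mathrm{Val}_\sigma(t_1),\dots)$, undefined if an argument is undefined. Partial satisfaction $\models_P$ / dissatisfaction $\mathrel{=\!\!|}_P$: $\sigma,I\models_P\top$ always; $\models_P x$ iff $\sigma(x)=\mathrm{true}$; $\models_P\psi_1\wedge\psi_2$ iff both; $\models_P\neg\psi$ iff $\mathrel{=\!\!|}_P\psi$;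 $\models_P p(\vec t)$ iff all $\mathrm{Val}_\sigma(t_i)$ defined and $I(p,(\mathrm{Val}_\sigma(t_i))_i)=\mathrm{true}$; $\mathrel{=\!\!|}_P\top$ never; $\mathrel{=\!\!|}_P x$ iff $\sigma(x)=\mathrm{false}$; $\mathrel{=\!\!|}_P\psi_1\wedge\psi_2$ iff $\mathrel{=\!\!|}_P\psi_1$ or $\mathrel{=\!\!|}_P\psi_2$; $\mathrel{=\!\!|}_P\neg\psi$ iff $\models_P\psi$; $\mathrel{=\!\!|}_P p(\vec t)$ iff all values defined and $I(\dots)=\mathrm{false}$. An assignment $\sigma$ obeys the meta-flow axiom, written $MFA(\sigma)$, if for every $x\in\mathcal X$: whenever $\sigma(\hat x)$ is defined, $\sigma(x)=\mathrm{true}$. *)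

theory Defs
  imports Main
begin

datatype 'f gterm = GApp 'f "'f gterm list"

(* well-formed ground terms w.r.t. an arity function: the set D *)
inductive wf_gterm :: "('f \<Rightarrow> nat) \<Rightarrow> 'f gterm \<Rightarrow> bool" for ar where
  "length ds = ar f \<Longrightarrow> (\<forall>d\<in>set ds. wf_gterm ar d) \<Longrightarrow> wf_gterm ar (GApp f ds)"

datatype ('x,'f) trm = DVar 'x | App 'f "('x,'f) trm list"

datatype ('x,'f,'p) fml =
    Top
  | SVar 'x
  | Conj "('x,'f,'p) fml" "('x,'f,'p) fml"
  | Neg "('x,'f,'p) fml"
  | Pred 'p "('x,'f) trm list"

fun wf_trm :: "('f \<Rightarrow> nat) \<Rightarrow> ('x,'f) trm \<Rightarrow> bool" where
  "wf_trm ar (DVar x) = True"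
| "wf_trm ar (App f ts) = (length ts = ar f \<and> (\<forall>t\<in>set ts. wf_trm ar t))"

fun wf_fml :: "('f \<Rightarrow> nat) \<Rightarrow> ('p \<Rightarrow> nat) \<Rightarrow> ('x,'f,'p) fml \<Rightarrow> bool" where
  "wf_fml ar par Top = True"
| "wf_fml ar par (SVar x) = True"
| "wf_fml ar par (Conj a b) = (wf_fml ar par a \<and> wf_fml ar par b)"
| "wf_fml ar par (Neg a) = wf_fml ar par a"
| "wf_fml ar par (Pred p ts) = (length ts = par p \<and> (\<forall>t\<in>set ts. wf_trm ar t))"

(* An assignment: a partial map on synchronisation variables (to bool) and
   a partial map on data flow variables hat x (to D). *)
record ('x,'f) assignment =
  sync :: "'x \<Rightarrow> bool option"
  data :: "'x \<Rightarrow> 'f gterm option"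

definition wf_assignment :: "('f \<Rightarrow> nat) \<Rightarrow> ('x,'f) assignment \<Rightarrow> bool" where
  "wf_assignment ar \<sigma> \<longleftrightarrow> (\<forall>x d. data \<sigma> x = Some d \<longrightarrow> wf_gterm ar d)"

type_synonym ('f,'p) interp = "'p \<times> 'f gterm list \<Rightarrow> bool option"

fun Val :: "('x,'f) assignment \<Rightarrow> ('x,'f) trm \<Rightarrow> 'f gterm option" where
  "Val \<sigma> (DVar x) = data \<sigma> x"
| "Val \<sigma> (App f ts) =
     (if (\<forall>t\<in>set ts. Val \<sigma> t \<noteq> None)
      then Some (GApp f (map (\<lambda>t. the (Val \<sigma> t)) ts)) else None)"

fun psat :: "('x,'f) assignment \<Rightarrow> ('f,'p) interp \<Rightarrow> ('x,'f,'p) fml \<Rightarrow> bool"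
and pdis :: "('x,'f) assignment \<Rightarrow> ('f,'p) interp \<Rightarrow> ('x,'f,'p) fml \<Rightarrow> bool" where
  "psat \<sigma> I Top = True"
| "psat \<sigma> I (SVar x) = (sync \<sigma> x = Some True)"
| "psat \<sigma> I (Conj a b) = (psat \<sigma> I a \<and> psat \<sigma> I b)"
| "psat \<sigma> I (Neg a) = pdis \<sigma> I a"
| "psat \<sigma> I (Pred p ts) = ((\<forall>t\<in>set ts. Val \<sigma> t \<noteq> None) \<and>
      I (p, map (\<lambda>t. the (Val \<sigma> t)) ts) = Some True)"
| "pdis \<sigma> I Top = False"
| "pdis \<sigma> I (SVar x) = (sync \<sigma> x = Some False)"
| "pdis \<sigma> I (Conj a b) = (pdis \<sigma> I a \<or> pdis \<sigma> I b)"
| "pdis \<sigma> I (Neg a) = psat \<sigma> I a"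
| "pdis \<sigma> I (Pred p ts) = ((\<forall>t\<in>set ts. Val \<sigma> t \<noteq> None) \<and>
      I (p, map (\<lambda>t. the (Val \<sigma> t)) ts) = Some False)"

definition MFA :: "('x,'f) assignment \<Rightarrow> bool" where
  "MFA \<sigma> \<longleftrightarrow> (\<forall>x. data \<sigma> x \<noteq> None \<longrightarrow> sync \<sigma> x = Some True)"

end

theory Submission
  imports Defs
begin

(* The argument is a persistence (monotonicity) argument.  Order assignments
   by extension: sigma' extends sigma if it agrees with sigma wherever sigma
   is defined.  By induction on terms, the value of a term is stable under
   extension once it is defined; by a simultaneous induction on formulas,
   partial satisfaction and dissatisfaction are then both preserved under
   extension.  Hence a formula satisfied by the totally undefined assignment
   is satisfied by every extension of it.  The undefined assignment obeys
   the meta-flow axiom vacuously, whereas its extension that assigns a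
   ground term to a single data flow variable hat x (and leaves x undefined)
   violates it.  So no formula is satisfied exactly by the assignments
   obeying the axiom. *)

definition extends :: "('x,'f) assignment \<Rightarrow> ('x,'f) assignment \<Rightarrow> bool" where
  "extends \<sigma> \<sigma>' \<longleftrightarrow> (\<forall>x b. sync \<sigma> x = Some b \<longrightarrow> sync \<sigma>' x = Some b) \<and>
                      (\<forall>x d. data \<sigma> x = Some d \<longrightarrow> data \<sigma>' x = Some d)"

lemma Val_extends:
  assumes "extends \<sigma> \<sigma>'" and "Val \<sigma> t \<noteq> None"
  shows "Val \<sigma>' t = Val \<sigma> t"
  using assms
proof (induction \<sigma> t rule: Val.induct)
  case (1 \<sigma> x)
  then show ?case by (auto simp: extends_def)
next
  case (2 \<sigma> f ts)
  then have defined: "\<forall>t\<in>set ts. Val \<sigma> t \<noteq> None" by (auto split: if_splits)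
  with 2 have "\<forall>t\<in>set ts. Val \<sigma>' t = Val \<sigma> t" by auto
  with defined show ?case by (simp cong: map_cong)
qed

(* Persistence: partial satisfaction and dissatisfaction survive extension.
   Both are proved together since negation swaps them. *)
lemma psat_pdis_extends:
  assumes "extends \<sigma> \<sigma>'"
  shows "(psat \<sigma> I \<psi> \<longrightarrow> psat \<sigma>' I \<psi>) \<and> (pdis \<sigma> I \<psi> \<longrightarrow> pdis \<sigma>' I \<psi>)"
proof (induction \<psi>)
  case (Pred p ts)
  (* once all arguments are defined, extension changes neither their
     definedness nor their values, so the interpretation sees the same tuple *)
  have same_args: "map (\<lambda>t. the (Val \<sigma>' t)) ts = map (\<lambda>t. the (Val \<sigma> t)) ts"
    and defined': "\<forall>t\<in>set ts. Val \<sigma>' t \<noteq> None"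
    if "\<forall>t\<in>set ts. Val \<sigma> t \<noteq> None"
    using that Val_extends[OF assms] by simp_all
  show ?case
    by (metis psat.simps(5) pdis.simps(5) same_args defined')
qed (use assms in \<open>auto simp: extends_def\<close>)

corollary psat_extends:
  "extends \<sigma> \<sigma>' \<Longrightarrow> psat \<sigma> I \<psi> \<Longrightarrow> psat \<sigma>' I \<psi>"
  using psat_pdis_extends by blast

definition empty_assignment :: "('x,'f) assignment" where
  "empty_assignment = \<lparr>sync = \<lambda>_. None, data = \<lambda>_. None\<rparr>"

lemma extends_empty_assignment: "extends empty_assignment \<sigma>"
  by (simp add: extends_def empty_assignment_def)

lemma wf_empty_assignment: "wf_assignment ar empty_assignment"
  by (simp add: wf_assignment_def empty_assignment_def)

lemma MFA_empty_assignment: "MFA empty_assignment"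
  by (simp add: MFA_def empty_assignment_def)

definition only_data :: "'x \<Rightarrow> 'f gterm \<Rightarrow> ('x,'f) assignment" where
  "only_data x d = \<lparr>sync = \<lambda>_. None, data = (\<lambda>_. None)(x := Some d)\<rparr>"

lemma wf_only_data: "wf_gterm ar d \<Longrightarrow> wf_assignment ar (only_data x d)"
  by (simp add: wf_assignment_def only_data_def)

lemma not_MFA_only_data: "\<not> MFA (only_data x d)"
  by (auto simp: MFA_def only_data_def)

theorem mainTheorem3:
  fixes ar :: "'f \<Rightarrow> nat" and par :: "'p \<Rightarrow> nat" and eq :: 'p
    and I :: "('f,'p) interp"
  assumes "(UNIV :: 'x set) \<noteq> {}"
    and "\<exists>d. wf_gterm ar d"
    and "par eq = 2"
  shows "\<not> (\<exists>\<psi> :: ('x,'f,'p) fml. wf_fml ar par \<psi> \<and>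
             (\<forall>\<sigma>. wf_assignment ar \<sigma> \<longrightarrow> (psat \<sigma> I \<psi> \<longleftrightarrow> MFA \<sigma>)))"
proof
  assume "\<exists>\<psi> :: ('x,'f,'p) fml. wf_fml ar par \<psi> \<and>
             (\<forall>\<sigma>. wf_assignment ar \<sigma> \<longrightarrow> (psat \<sigma> I \<psi> \<longleftrightarrow> MFA \<sigma>))"
  then obtain \<psi> :: "('x,'f,'p) fml"
    where defines_MFA: "\<And>\<sigma>. wf_assignment ar \<sigma> \<Longrightarrow> psat \<sigma> I \<psi> \<longleftrightarrow> MFA \<sigma>" by blast
  obtain d where d: "wf_gterm ar d" using assms(2) by blast
  fix x :: 'x
  have "psat empty_assignment I \<psi>"
    using defines_MFA[OF wf_empty_assignment] MFA_empty_assignment by simp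
  then have "psat (only_data x d) I \<psi>"
    by (rule psat_extends[OF extends_empty_assignment])
  then have "MFA (only_data x d)"
    using defines_MFA[OF wf_only_data[OF d]] by simp
  then show False
    using not_MFA_only_data[of x d] by contradiction
qed

end
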